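(* Let $R$ be a finite set of attributes. Consider formal expressions (dependencies) of the form $X \rightarrow Y$ with $X, Y \subseteq R$, where juxtaposition of attribute sets denotes union (e.g. $XZ = X \cup Z$). Consider the following two systems of inference rules on such expressions. System O: (O1) Identity: for all $X \subseteq R$, infer $X \rightarrow X$. (O2) Decomposition: from $X \rightarrow Y$ and $Z \subseteq Y$, infer $X \rightarrow Z$. (O3) Composition: from $X \rightarrow Y$ and $Z \rightarrow W$, infer $XZ \rightarrow YW$. System N: (N1) Reflexivity: for all $Y \subseteq X \subseteq R$, infer $X \rightarrow Y$. (N2) Append: from $X \rightarrow Y$ and $Z \subseteq W$, infer $XW \rightarrow YZ$. (N3) Union: from $X \rightarrow Y$ and $X \rightarrow Z$, infer $X \rightarrow YZ$. (N4) Simplification: from $X \rightarrow YZ$, infer $X \rightarrow Y$ and $X \rightarrow Z$. Then the two systems are equivalent: every rule of System O is derivable using the rules of System N, and every rule of System N is derivable using the rules of System O. Consequently, for every set $\Sigma$ of such expressions and every expression $X \rightarrow Y$, $X \rightarrow Y$ is derivable from $\Sigma$ using System O if and only if it is derivable from $\Sigma$ using System N.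
   Context: System O is the axiom system the paper gives for Ontology Functional Dependencies (OFDs); System N is the axiom system for Null Functional Dependencies (NFDs), i.e. functional dependencies over relations with nulls. The statement concerns only syntactic derivability with these rules; $X, Y, Z, W$ range over subsets of $R$. *)

theory Defs
  imports Main
begin

text \<open>A dependency X -> Y over attribute set R is represented by the pair (X, Y).
  Juxtaposition XZ is union.\<close>

type_synonym 'a dep = "'a set \<times> 'a set"

inductive derivO :: "'a set \<Rightarrow> 'a dep set \<Rightarrow> 'a dep \<Rightarrow> bool"
  for R :: "'a set" and \<Sigma> :: "'a dep set" where
  O_hyp: "d \<in> \<Sigma> \<Longrightarrow> derivO R \<Sigma> d"
| O1_identity: "X \<subseteq> R \<Longrightarrow> derivO R \<Sigma> (X, X)"
| O2_decomposition: "derivO R \<Sigma> (X, Y) \<Longrightarrow> Z \<subseteq> Y \<Longrightarrow> derivO R \<Sigma> (X, Z)"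
| O3_composition: "derivO R \<Sigma> (X, Y) \<Longrightarrow> derivO R \<Sigma> (Z, W) \<Longrightarrow> derivO R \<Sigma> (X \<union> Z, Y \<union> W)"

inductive derivN :: "'a set \<Rightarrow> 'a dep set \<Rightarrow> 'a dep \<Rightarrow> bool"
  for R :: "'a set" and \<Sigma> :: "'a dep set" where
  N_hyp: "d \<in> \<Sigma> \<Longrightarrow> derivN R \<Sigma> d"
| N1_reflexivity: "Y \<subseteq> X \<Longrightarrow> X \<subseteq> R \<Longrightarrow> derivN R \<Sigma> (X, Y)"
| N2_append: "derivN R \<Sigma> (X, Y) \<Longrightarrow> Z \<subseteq> W \<Longrightarrow> W \<subseteq> R \<Longrightarrow> derivN R \<Sigma> (X \<union> W, Y \<union> Z)"
| N3_union: "derivN R \<Sigma> (X, Y) \<Longrightarrow> derivN R \<Sigma> (X, Z) \<Longrightarrow> derivN R \<Sigma> (X, Y \<union> Z)"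
| N4_simplification1: "derivN R \<Sigma> (X, Y \<union> Z) \<Longrightarrow> derivN R \<Sigma> (X, Y)"
| N4_simplification2: "derivN R \<Sigma> (X, Y \<union> Z) \<Longrightarrow> derivN R \<Sigma> (X, Z)"

definition deps_over :: "'a set \<Rightarrow> 'a dep set \<Rightarrow> bool" where
  "deps_over R \<Sigma> \<longleftrightarrow> (\<forall>(X, Y) \<in> \<Sigma>. X \<subseteq> R \<and> Y \<subseteq> R)"

end

theory Submission
  imports Defs
begin

text \<open>System N simulates
  identity by reflexivity, decomposition by simplification of \<open>X \<rightarrow> Z \<union> Y\<close>, and
  composition by appending \<open>Z\<close> to \<open>X \<rightarrow> Y\<close> and \<open>X\<close> to \<open>Z \<rightarrow> W\<close> and taking the union;
  appending is only allowed for subsets of \<open>R\<close>, which holds because every dependency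
  derivable from dependencies over \<open>R\<close> is again over \<open>R\<close>. System O simulates reflexivity
  by identity and decomposition, append by composing with \<open>W \<rightarrow> Z\<close>, union by composing
  \<open>X \<rightarrow> Y\<close> with \<open>X \<rightarrow> Z\<close>, and simplification by decomposition.\<close>

lemma derivN_subset:
  assumes "derivN R \<Sigma> (X, Y)" and "deps_over R \<Sigma>"
  shows "X \<subseteq> R \<and> Y \<subseteq> R"
  using assms by (induction "(X, Y)" arbitrary: X Y) (auto simp: deps_over_def)

lemma derivN_identity: "X \<subseteq> R \<Longrightarrow> derivN R \<Sigma> (X, X)"
  by (rule N1_reflexivity) simp_all

lemma derivN_decomposition:
  assumes "derivN R \<Sigma> (X, Y)" and "Z \<subseteq> Y"
  shows "derivN R \<Sigma> (X, Z)"
proof -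
  from assms have "derivN R \<Sigma> (X, Z \<union> Y)"
    by (simp add: Un_absorb1)
  then show ?thesis
    by (rule N4_simplification1)
qed

lemma derivN_composition:
  assumes \<Sigma>: "deps_over R \<Sigma>"
    and XY: "derivN R \<Sigma> (X, Y)" and ZW: "derivN R \<Sigma> (Z, W)"
  shows "derivN R \<Sigma> (X \<union> Z, Y \<union> W)"
proof -
  have "X \<subseteq> R" "Z \<subseteq> R"
    using derivN_subset[OF XY \<Sigma>] derivN_subset[OF ZW \<Sigma>] by simp_all
  have "derivN R \<Sigma> (X \<union> Z, Y \<union> {})"
    using N2_append[OF XY _ \<open>Z \<subseteq> R\<close>] by blast
  moreover have "derivN R \<Sigma> (Z \<union> X, W \<union> {})"
    using N2_append[OF ZW _ \<open>X \<subseteq> R\<close>] by blast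
  ultimately show ?thesis
    using N3_union by (simp add: Un_commute)
qed

lemma derivO_reflexivity: "Y \<subseteq> X \<Longrightarrow> X \<subseteq> R \<Longrightarrow> derivO R \<Sigma> (X, Y)"
  by (rule O2_decomposition[OF O1_identity])

lemma derivO_append:
  "derivO R \<Sigma> (X, Y) \<Longrightarrow> Z \<subseteq> W \<Longrightarrow> W \<subseteq> R \<Longrightarrow> derivO R \<Sigma> (X \<union> W, Y \<union> Z)"
  by (blast intro: O3_composition derivO_reflexivity)

lemma derivO_union:
  "derivO R \<Sigma> (X, Y) \<Longrightarrow> derivO R \<Sigma> (X, Z) \<Longrightarrow> derivO R \<Sigma> (X, Y \<union> Z)"
  using O3_composition[of R \<Sigma> X Y X Z] by simp

lemma derivO_simplification:
  "derivO R \<Sigma> (X, Y \<union> Z) \<Longrightarrow> derivO R \<Sigma> (X, Y) \<and> derivO R \<Sigma> (X, Z)"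
  by (blast intro: O2_decomposition)

lemma derivO_imp_derivN: "derivO R \<Sigma> d \<Longrightarrow> deps_over R \<Sigma> \<Longrightarrow> derivN R \<Sigma> d"
proof (induction rule: derivO.induct)
  case (O_hyp d)
  from O_hyp.hyps show ?case by (rule N_hyp)
next
  case (O1_identity X)
  from O1_identity.hyps show ?case by (rule derivN_identity)
next
  case (O2_decomposition X Y Z)
  then show ?case by (blast intro: derivN_decomposition)
next
  case (O3_composition X Y Z W)
  then show ?case by (blast intro: derivN_composition)
qed

lemma derivN_imp_derivO: "derivN R \<Sigma> d \<Longrightarrow> derivO R \<Sigma> d"
proof (induction rule: derivN.induct)
  case (N_hyp d)
  then show ?case by (rule O_hyp)
next
  case (N1_reflexivity Y X)
  then show ?case by (rule derivO_reflexivity)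
next
  case (N2_append X Y Z W)
  from N2_append.IH N2_append.hyps(2,3) show ?case by (rule derivO_append)
next
  case (N3_union X Y Z)
  from N3_union.IH show ?case by (rule derivO_union)
next
  case (N4_simplification1 X Y Z)
  then show ?case by (blast dest: derivO_simplification)
next
  case (N4_simplification2 X Y Z)
  then show ?case by (blast dest: derivO_simplification)
qed

theorem theorem3p6:
  fixes R :: "'a set"
  assumes "finite R"
  shows
    \<comment> \<open>every rule of System O is derivable using System N\<close>
    "(\<forall>\<Sigma>. deps_over R \<Sigma> \<longrightarrow>
        (\<forall>X. X \<subseteq> R \<longrightarrow> derivN R \<Sigma> (X, X))
      \<and> (\<forall>X Y Z. derivN R \<Sigma> (X, Y) \<longrightarrow> Z \<subseteq> Y \<longrightarrow> derivN R \<Sigma> (X, Z))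
      \<and> (\<forall>X Y Z W. derivN R \<Sigma> (X, Y) \<longrightarrow> derivN R \<Sigma> (Z, W) \<longrightarrow> derivN R \<Sigma> (X \<union> Z, Y \<union> W)))
   \<and> \<comment> \<open>every rule of System N is derivable using System O\<close>
     (\<forall>\<Sigma>. deps_over R \<Sigma> \<longrightarrow>
        (\<forall>X Y. Y \<subseteq> X \<longrightarrow> X \<subseteq> R \<longrightarrow> derivO R \<Sigma> (X, Y))
      \<and> (\<forall>X Y Z W. derivO R \<Sigma> (X, Y) \<longrightarrow> Z \<subseteq> W \<longrightarrow> W \<subseteq> R \<longrightarrow> derivO R \<Sigma> (X \<union> W, Y \<union> Z))
      \<and> (\<forall>X Y Z. derivO R \<Sigma> (X, Y) \<longrightarrow> derivO R \<Sigma> (X, Z) \<longrightarrow> derivO R \<Sigma> (X, Y \<union> Z))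
      \<and> (\<forall>X Y Z. derivO R \<Sigma> (X, Y \<union> Z) \<longrightarrow> derivO R \<Sigma> (X, Y) \<and> derivO R \<Sigma> (X, Z)))
   \<and> \<comment> \<open>consequently, the two derivability relations coincide\<close>
     (\<forall>\<Sigma> X Y. deps_over R \<Sigma> \<longrightarrow> X \<subseteq> R \<longrightarrow> Y \<subseteq> R \<longrightarrow>
        (derivO R \<Sigma> (X, Y) \<longleftrightarrow> derivN R \<Sigma> (X, Y)))"
  by (intro conjI allI impI iffI)
    (blast intro: derivN_identity derivN_decomposition derivN_composition
      derivO_reflexivity derivO_append derivO_union derivO_imp_derivN derivN_imp_derivO
      dest: derivO_simplification)+

end
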